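(* Let $\Lambda,\Lambda':\mathbb{R}\to[0,1]$ be decreasing functions. Then, on $L^\infty$: (a) if $\Lambda\ge\Lambda'$ pointwise, then $\mathrm{ES}_\Lambda\ge\mathrm{ES}_{\Lambda'}$; (b) $\mathrm{ES}_\Lambda$ is monotone: $\mathrm{ES}_\Lambda(X)\ge\mathrm{ES}_\Lambda(Y)$ whenever $X\ge Y$ a.s.; (c) $\mathrm{ES}_\Lambda\ge\mathrm{VaR}_\Lambda$; (d) $\mathrm{ES}_\Lambda$ is quasi-convex; (e) $\mathrm{ES}_\Lambda$ is normalized: $\mathrm{ES}_\Lambda(t)=t$ for all constants $t\in\mathbb{R}$; (f) $\mathrm{ES}_\Lambda$ is cash subadditive: $\mathrm{ES}_\Lambda(X+m)\le\mathrm{ES}_\Lambda(X)+m$ for all $X\in L^\infty$, $m\ge0$; (g) $\mathrm{ES}_\Lambda$ is SSD-consistent: $\mathrm{ES}_\Lambda(X)\ge\mathrm{ES}_\Lambda(Y)$ whenever $X\succeq_{\rm icx}Y$; (h) $\mathrm{ES}_\Lambda$ is quasi-concave in mixtures; (i) if $\Lambda$ takes values in $[0,1)$, then $\mathrm{ES}_\Lambda$ is $L^1$-continuous: $\mathrm{ES}_\Lambda(X_n)\to\mathrm{ES}_\Lambda(X)$ whenever $X,X_1,X_2,\dots\in L^\infty$ and $X_n\to X$ in $L^1$.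
   Context: $(\Omega,\mathcal F,\mathbb P)$ is an atomless probability space, $L^0$ all random variables, $L^1$ integrable ones, $L^\infty$ essentially bounded ones; "decreasing" is weak; $\wedge=\min$. For $\alpha\in[0,1]$, $X\in L^0$: $\mathrm{VaR}_\alpha(X)=\inf\{x\in\mathbb{R}:\mathbb P(X\le x)\ge\alpha\}$ ($\inf\mathbb{R}=-\infty$). For $X\in L^\infty$: $\mathrm{ES}_\alpha(X)=\frac{1}{1-\alpha}\int_\alpha^1\mathrm{VaR}_\beta(X)\,\mathrm d\beta$ for $\alpha<1$, $\mathrm{ES}_1(X)=\mathrm{VaR}_1(X)$. For decreasing $\Lambda:\mathbb{R}\to[0,1]$: $\mathrm{VaR}_\Lambda(X)=\inf\{x\in\mathbb{R}:\mathbb P(X\le x)\ge\Lambda(x)\}$ and $\mathrm{ES}_\Lambda(X)=\sup_{x\in\mathbb{R}}\left(\mathrm{ES}_{\Lambda(x)}(X)\wedge x\right)$, $X\in L^\infty$. Quasi-convex: $\rho(\gamma X+(1-\gamma)Y)\le\max\{\rho(X),\rho(Y)\}$ for $\gamma\in[0,1]$. $X\succeq_{\rm icx}Y$ means $\mathbb E[f(X)]\ge\mathbb E[f(Y)]$ for all increasing convex $f:\mathbb{R}\to\mathbb{R}$. A law-invariant $\rho$ is quasi-concave in mixtures if $F\mapsto\rho(X_F)$ is quasi-concave on the set of compactly supported distributions on $\mathbb{R}$ (under mixtures $\gamma F+(1-\gamma)G$), where $X_F$ denotes a random variable with distribution $F$. *)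

theory Defs
  imports "HOL-Probability.Probability"
begin

definition atomless :: "'a measure \<Rightarrow> bool" where
  "atomless M \<longleftrightarrow> (\<forall>A\<in>sets M. measure M A > 0 \<longrightarrow>
     (\<exists>B\<in>sets M. B \<subseteq> A \<and> 0 < measure M B \<and> measure M B < measure M A))"

definition Linf :: "'a measure \<Rightarrow> ('a \<Rightarrow> real) set" where
  "Linf M = {X. X \<in> borel_measurable M \<and> (\<exists>C. AE \<omega> in M. \<bar>X \<omega>\<bar> \<le> C)}"

definition cdf_of :: "'a measure \<Rightarrow> ('a \<Rightarrow> real) \<Rightarrow> real \<Rightarrow> real" where
  "cdf_of M X x = measure M {\<omega> \<in> space M. X \<omega> \<le> x}"

text \<open>VaR, extended-real valued (Inf of the empty set is +infinity, Inf of all reals is -infinity).\<close>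
definition VaR :: "'a measure \<Rightarrow> real \<Rightarrow> ('a \<Rightarrow> real) \<Rightarrow> ereal" where
  "VaR M \<alpha> X = Inf (ereal ` {x. cdf_of M X x \<ge> \<alpha>})"

text \<open>ES for L-infinity random variables (VaR is finite for beta in (0,1] there;
  the value at beta = 0 is irrelevant for the Lebesgue integral).\<close>
definition ES :: "'a measure \<Rightarrow> real \<Rightarrow> ('a \<Rightarrow> real) \<Rightarrow> real" where
  "ES M \<alpha> X = (if \<alpha> < 1
      then (LBINT \<beta>:{\<alpha>..1}. real_of_ereal (VaR M \<beta> X)) / (1 - \<alpha>)
      else real_of_ereal (VaR M 1 X))"

definition VaR_Lambda :: "'a measure \<Rightarrow> (real \<Rightarrow> real) \<Rightarrow> ('a \<Rightarrow> real) \<Rightarrow> ereal" where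
  "VaR_Lambda M \<Lambda> X = Inf (ereal ` {x. cdf_of M X x \<ge> \<Lambda> x})"

definition ES_Lambda :: "'a measure \<Rightarrow> (real \<Rightarrow> real) \<Rightarrow> ('a \<Rightarrow> real) \<Rightarrow> real" where
  "ES_Lambda M \<Lambda> X = (SUP x. min (ES M (\<Lambda> x) X) x)"

definition icx_ge :: "'a measure \<Rightarrow> ('a \<Rightarrow> real) \<Rightarrow> ('a \<Rightarrow> real) \<Rightarrow> bool" where
  "icx_ge M X Y \<longleftrightarrow> (\<forall>f :: real \<Rightarrow> real. mono f \<and> convex_on UNIV f \<longrightarrow>
      (\<integral>\<omega>. f (X \<omega>) \<partial>M) \<ge> (\<integral>\<omega>. f (Y \<omega>) \<partial>M))"

end

theory Submission
  imports Defs
begin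

(* By the quantile transform, (1 - \<alpha>) ES_\<alpha>(X) is the integral of the quantile function of X
   over (\<alpha>, 1), and comparing pointwise with t + (q - t)^+ gives the Rockafellar-Uryasev formula
   (1 - \<alpha>) ES_\<alpha>(X) = min_t ((1 - \<alpha>) t + E (X - t)^+) for \<alpha> < 1. Together with
   ES_1(X) = ess sup X this yields, for every \<alpha> in [0, 1],

     ES_\<alpha>(X) \<le> c  iff  E (X - t)^+ \<le> (1 - \<alpha>) (c - t) for some t \<le> c.

   Hence ES_\<alpha> sees X only through its stop-loss transform t \<mapsto> E (X - t)^+, monotonically, and
   the properties of the stop-loss transform (monotone for the a.s. and the increasing convex
   order, jointly convex, affine under mixtures of distributions, 1-Lipschitz in L^1, shifted by
   translations) become properties of ES_\<alpha>. Finally ES_\<Lambda>(X) = sup_x min (f x) x with the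
   decreasing function f x = ES_{\<Lambda>(x)}(X), and elementary properties of f \<mapsto> sup_x min (f x) x
   carry everything over to ES_\<Lambda>. *)

section \<open>Quantiles and the stop-loss transform\<close>

definition stop_loss :: "'a measure \<Rightarrow> ('a \<Rightarrow> real) \<Rightarrow> real \<Rightarrow> real" where
  "stop_loss M X t = (\<integral>\<omega>. max (X \<omega> - t) 0 \<partial>M)"

definition quantile :: "'a measure \<Rightarrow> ('a \<Rightarrow> real) \<Rightarrow> real \<Rightarrow> real" where
  "quantile M X \<beta> = Inf {x. \<beta> \<le> cdf_of M X x}"

abbreviation uniform_01 :: "real measure" where
  "uniform_01 \<equiv> restrict_space lborel {0<..<1}"

lemma prob_space_uniform_01: "prob_space uniform_01"
  by (auto simp: emeasure_restrict_space space_restrict_space intro!: prob_spaceI)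

lemma integrable_uniform_01_bounded:
  fixes g :: "real \<Rightarrow> real"
  assumes "g \<in> borel_measurable uniform_01" "\<And>\<beta>. 0 < \<beta> \<Longrightarrow> \<beta> < 1 \<Longrightarrow> \<bar>g \<beta>\<bar> \<le> B"
  shows "integrable uniform_01 g"
proof -
  interpret prob_space uniform_01 by (rule prob_space_uniform_01)
  show ?thesis
    by (rule integrable_const_bound[where B=B])
       (use assms in \<open>auto intro!: AE_I2 simp: space_restrict_space\<close>)
qed

lemma indicator_measurable_uniform_01[measurable]:
  "(\<lambda>\<beta>. indicator {a<..<b} \<beta> :: real) \<in> borel_measurable uniform_01"
  by (rule measurable_restrict_space1) simp

lemma integral_uniform_01_indicator:
  assumes "0 \<le> \<alpha>" "\<alpha> < 1"
  shows "(\<integral>\<beta>. indicator {\<alpha><..<1} \<beta> * t \<partial>uniform_01) = (1 - \<alpha>) * t"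
proof -
  have "{\<alpha><..<1} \<inter> space uniform_01 = {\<alpha><..<1::real}"
    using assms by (auto simp: space_restrict_space)
  moreover have "measure uniform_01 {\<alpha><..<1} = 1 - \<alpha>"
    using assms by (subst measure_restrict_space) (auto simp: measure_def)
  ultimately show ?thesis by simp
qed

lemma stop_loss_nonneg: "0 \<le> stop_loss M X t"
  unfolding stop_loss_def by (rule Bochner_Integration.integral_nonneg) simp

lemma Linf_const: "(\<lambda>\<omega>. c) \<in> Linf M"
  unfolding Linf_def by auto

lemma Linf_add:
  assumes "X \<in> Linf M" "Y \<in> Linf M"
  shows "(\<lambda>\<omega>. X \<omega> + Y \<omega>) \<in> Linf M"
proof -
  obtain C D where "AE \<omega> in M. \<bar>X \<omega>\<bar> \<le> C" "AE \<omega> in M. \<bar>Y \<omega>\<bar> \<le> D"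
    using assms unfolding Linf_def by blast
  then have "AE \<omega> in M. \<bar>X \<omega> + Y \<omega>\<bar> \<le> C + D"
    by eventually_elim linarith
  then show ?thesis using assms unfolding Linf_def by auto
qed

lemma Linf_cmult:
  assumes "X \<in> Linf M"
  shows "(\<lambda>\<omega>. c * X \<omega>) \<in> Linf M"
proof -
  obtain C where "AE \<omega> in M. \<bar>X \<omega>\<bar> \<le> C"
    using assms unfolding Linf_def by blast
  then have "AE \<omega> in M. \<bar>c * X \<omega>\<bar> \<le> \<bar>c\<bar> * C"
    by eventually_elim (simp add: abs_mult mult_left_mono)
  then show ?thesis using assms unfolding Linf_def by auto
qed

locale bounded_rv = prob_space M for M :: "'a measure" +
  fixes X :: "'a \<Rightarrow> real" and C :: real
  assumes X_measurable[measurable]: "X \<in> borel_measurable M"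
    and AE_abs_le: "AE \<omega> in M. \<bar>X \<omega>\<bar> \<le> C"

lemma Linf_imp_bounded_rv: "prob_space M \<Longrightarrow> X \<in> Linf M \<Longrightarrow> \<exists>C. bounded_rv M X C"
  unfolding Linf_def bounded_rv_def bounded_rv_axioms_def by auto

sublocale bounded_rv \<subseteq> law: cdf_distribution "distr M borel X"
  unfolding cdf_distribution_def by (rule real_distribution_distr) simp

context bounded_rv
begin

abbreviation F :: "real \<Rightarrow> real" where
  "F \<equiv> cdf_of M X"

lemma cdf_of_eq_cdf_distr: "F = cdf (distr M borel X)"
  unfolding cdf_of_def cdf_def
  by (subst measure_distr) (auto intro!: arg_cong[where f="measure M"])

lemma cdf_of_mono: "mono F"
  unfolding cdf_of_eq_cdf_distr by (rule law.mono)

lemma cdf_of_right_continuous: "continuous (at_right x) F"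
  unfolding cdf_of_eq_cdf_distr by (rule law.cont)

lemma integrable_X: "integrable M X"
  by (rule integrable_const_bound[where B=C]) (use AE_abs_le in auto)

lemma cdf_of_measurable: "F \<in> borel_measurable borel"
  unfolding cdf_of_eq_cdf_distr by (rule law.measurable_C)

lemma cdf_of_eq_1_iff: "F c = 1 \<longleftrightarrow> (AE \<omega> in M. X \<omega> \<le> c)"
proof -
  have "(AE \<omega> in M. X \<omega> \<le> c) \<longleftrightarrow> (AE \<omega> in M. \<omega> \<in> {\<omega> \<in> space M. X \<omega> \<le> c})"
    by (rule AE_cong) auto
  then show ?thesis unfolding cdf_of_def by (subst prob_eq_1) auto
qed

lemma cdf_of_eq_0:
  assumes "x < - C"
  shows "F x = 0"
proof -
  have "AE \<omega> in M. \<omega> \<notin> {\<omega> \<in> space M. X \<omega> \<le> x}"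
    using AE_abs_le by eventually_elim (use assms in auto)
  then show ?thesis unfolding cdf_of_def by (subst prob_eq_0) auto
qed

lemma AE_le_bound: "AE \<omega> in M. X \<omega> \<le> C"
  using AE_abs_le by eventually_elim auto

lemma AE_ge_neg_bound: "AE \<omega> in M. - C \<le> X \<omega>"
  using AE_abs_le by eventually_elim auto

lemma quantile_le_iff:
  assumes "0 < \<beta>" "\<beta> \<le> 1"
  shows "quantile M X \<beta> \<le> x \<longleftrightarrow> \<beta> \<le> F x"
proof -
  let ?S = "{x. \<beta> \<le> F x}"
  have "C \<in> ?S" using AE_le_bound cdf_of_eq_1_iff[of C] assms by simp
  then have ne: "?S \<noteq> {}" by blast
  have bdd: "bdd_below ?S"
    by (rule bdd_belowI[of _ "- C"]) (use cdf_of_eq_0 assms in \<open>fastforce simp: not_le[symmetric]\<close>)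
  show ?thesis
  proof
    assume "quantile M X \<beta> \<le> x"
    have "\<beta> \<le> (INF s\<in>?S. F s)"
      by (rule cINF_greatest[OF ne]) auto
    also have "\<dots> = F (quantile M X \<beta>)"
      unfolding quantile_def
      using continuous_at_Inf_mono[OF cdf_of_mono cdf_of_right_continuous ne bdd] ..
    also have "\<dots> \<le> F x"
      using cdf_of_mono \<open>quantile M X \<beta> \<le> x\<close> by (rule monoD)
    finally show "\<beta> \<le> F x" .
  qed (unfold quantile_def, auto intro!: cInf_lower bdd)
qed

lemma quantile_mono:
  assumes "0 < \<beta>" "\<beta> \<le> \<beta>'" "\<beta>' \<le> 1"
  shows "quantile M X \<beta> \<le> quantile M X \<beta>'"
  using quantile_le_iff[of \<beta>' "quantile M X \<beta>'"] quantile_le_iff[of \<beta> "quantile M X \<beta>'"] assms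
  by simp

lemma quantile_bounds:
  assumes "0 < \<beta>" "\<beta> \<le> 1"
  shows "- C \<le> quantile M X \<beta>" "quantile M X \<beta> \<le> C"
proof -
  show "quantile M X \<beta> \<le> C"
    using quantile_le_iff[OF assms] cdf_of_eq_1_iff[of C] AE_le_bound assms by simp
  have "\<beta> \<le> F (quantile M X \<beta>)"
    using quantile_le_iff[OF assms, of "quantile M X \<beta>"] by simp
  then show "- C \<le> quantile M X \<beta>"
    using cdf_of_eq_0[of "quantile M X \<beta>"] assms by force
qed

lemma quantile_measurable: "quantile M X \<in> borel_measurable (restrict_space borel {0<..1})"
  by (rule borel_measurable_mono_on_fnc) (auto simp: mono_on_def intro: quantile_mono)

lemma quantile_measurable_uniform_01: "quantile M X \<in> borel_measurable uniform_01"
  by (subst measurable_cong_sets[OF sets_restrict_space_cong[OF sets_lborel] refl])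
     (rule measurable_restrict_mono[OF quantile_measurable], auto)

text \<open>Outside \<open>(0, 1]\<close>, VaR is \<open>\<plusminus>\<infinity>\<close>, which \<^const>\<open>real_of_ereal\<close> sends to 0.\<close>

lemma real_of_VaR:
  "real_of_ereal (VaR M \<beta> X) = (if 0 < \<beta> \<and> \<beta> \<le> 1 then quantile M X \<beta> else 0)"
proof (cases "0 < \<beta> \<and> \<beta> \<le> 1")
  case True
  then have "{x. \<beta> \<le> F x} = {quantile M X \<beta>..}"
    using quantile_le_iff by auto
  moreover have "(INF x\<in>{a..}. ereal x) = ereal a" for a
    by (rule antisym) (auto intro: INF_lower INF_greatest)
  ultimately show ?thesis
    using True unfolding VaR_def by simp
next
  case False
  have "F x \<le> 1" "0 \<le> F x" for x
    unfolding cdf_of_def by auto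
  then have "{x. \<beta> \<le> F x} = (if \<beta> \<le> 0 then UNIV else {})"
    using False by (auto intro: order_trans)
  moreover have "(INF x. ereal x) = - \<infinity>"
    by (rule ereal_bot, rule INF_lower) simp
  ultimately show ?thesis
    using False unfolding VaR_def by (auto simp: top_ereal_def)
qed

lemma VaR_measurable: "(\<lambda>\<beta>. real_of_ereal (VaR M \<beta> X)) \<in> borel_measurable borel"
  unfolding real_of_VaR using measurable_restrict_space_iff[of "{0<..1}" borel 0 borel "quantile M X"]
  by (simp add: quantile_measurable conj_commute)

lemma integral_quantile_transform:
  fixes g :: "real \<Rightarrow> real"
  assumes g: "g \<in> borel_measurable borel"
  shows "(\<integral>\<omega>. g (X \<omega>) \<partial>M) = (\<integral>\<beta>. g (quantile M X \<beta>) \<partial>uniform_01)"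
proof -
  have "(\<integral>\<omega>. g (X \<omega>) \<partial>M) = integral\<^sup>L (distr M borel X) g"
    by (rule integral_distr[symmetric, OF X_measurable g])
  also have "distr M borel X = distr uniform_01 borel (quantile M X)"
    using law.distr_I_eq_M unfolding quantile_def[abs_def] cdf_of_eq_cdf_distr ..
  also have "integral\<^sup>L \<dots> g = (\<integral>\<beta>. g (quantile M X \<beta>) \<partial>uniform_01)"
    by (rule integral_distr[OF quantile_measurable_uniform_01 g])
  finally show ?thesis .
qed

lemma integrable_stop_loss: "integrable M (\<lambda>\<omega>. max (X \<omega> - t) 0)"
  by (rule integrable_const_bound[where B="\<bar>C\<bar> + \<bar>t\<bar>"])
     (use AE_abs_le in \<open>auto elim!: eventually_mono\<close>)

lemma stop_loss_eq_0_iff: "stop_loss M X t = 0 \<longleftrightarrow> (AE \<omega> in M. X \<omega> \<le> t)"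
proof -
  have "stop_loss M X t = 0 \<longleftrightarrow> (AE \<omega> in M. max (X \<omega> - t) 0 = 0)"
    unfolding stop_loss_def by (rule integral_nonneg_eq_0_iff_AE[OF integrable_stop_loss]) auto
  also have "\<dots> \<longleftrightarrow> (AE \<omega> in M. X \<omega> \<le> t)"
    by (rule AE_cong) auto
  finally show ?thesis .
qed

lemma ES_eq_integral_quantile:
  assumes "0 \<le> \<alpha>" "\<alpha> < 1"
  shows "(1 - \<alpha>) * ES M \<alpha> X = (\<integral>\<beta>. indicator {\<alpha><..<1} \<beta> * quantile M X \<beta> \<partial>uniform_01)"
proof -
  have "(\<integral>\<beta>. indicator {\<alpha><..<1} \<beta> * quantile M X \<beta> \<partial>uniform_01)
      = (\<integral>\<beta>. indicator {0<..<1} \<beta> *\<^sub>R (indicator {\<alpha><..<1} \<beta> * quantile M X \<beta>) \<partial>lborel)"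
    by (rule integral_restrict_space) simp
  also have "\<dots> = (\<integral>\<beta>. indicator {\<alpha><..<1} \<beta> * real_of_ereal (VaR M \<beta> X) \<partial>lborel)"
    using assms by (intro Bochner_Integration.integral_cong) (auto simp: real_of_VaR split: split_indicator)
  also have "\<dots> = (LBINT \<beta>:{\<alpha>..1}. real_of_ereal (VaR M \<beta> X))"
    unfolding set_lebesgue_integral_def
  proof (rule integral_cong_AE)
    show "AE \<beta> in lborel. indicator {\<alpha><..<1} \<beta> * real_of_ereal (VaR M \<beta> X)
        = indicator {\<alpha>..1} \<beta> *\<^sub>R real_of_ereal (VaR M \<beta> X)"
      using AE_lborel_singleton[of \<alpha>] AE_lborel_singleton[of 1]
      by eventually_elim (auto split: split_indicator)
  qed (simp_all add: borel_measurable_times VaR_measurable)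
  also have "\<dots> = (1 - \<alpha>) * ES M \<alpha> X"
    using assms unfolding ES_def by simp
  finally show ?thesis ..
qed

lemma integrable_quantile_tail: "integrable uniform_01 (\<lambda>\<beta>. indicator {\<alpha><..<1} \<beta> * quantile M X \<beta>)"
proof (rule integrable_uniform_01_bounded[where B="\<bar>C\<bar>"])
  show "(\<lambda>\<beta>. indicator {\<alpha><..<1} \<beta> * quantile M X \<beta>) \<in> borel_measurable uniform_01"
    by (intro borel_measurable_times indicator_measurable_uniform_01 quantile_measurable_uniform_01)
  fix \<beta> :: real assume "0 < \<beta>" "\<beta> < 1"
  then show "\<bar>indicator {\<alpha><..<1} \<beta> * quantile M X \<beta>\<bar> \<le> \<bar>C\<bar>"
    using quantile_bounds[of \<beta>] by (auto split: split_indicator)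
qed

lemma integrable_quantile_excess: "integrable uniform_01 (\<lambda>\<beta>. max (quantile M X \<beta> - t) 0)"
proof (rule integrable_uniform_01_bounded[where B="\<bar>C\<bar> + \<bar>t\<bar>"])
  show "(\<lambda>\<beta>. max (quantile M X \<beta> - t) 0) \<in> borel_measurable uniform_01"
    by (intro borel_measurable_max borel_measurable_diff quantile_measurable_uniform_01) simp_all
  fix \<beta> :: real assume "0 < \<beta>" "\<beta> < 1"
  then show "\<bar>max (quantile M X \<beta> - t) 0\<bar> \<le> \<bar>C\<bar> + \<bar>t\<bar>"
    using quantile_bounds[of \<beta>] by auto
qed

lemma integral_quantile_tail_split:
  assumes "0 \<le> \<alpha>" "\<alpha> < 1"
  shows "(\<integral>\<beta>. indicator {\<alpha><..<1} \<beta> * t + max (quantile M X \<beta> - t) 0 \<partial>uniform_01)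
    = (1 - \<alpha>) * t + stop_loss M X t"
proof -
  have "integrable uniform_01 (\<lambda>\<beta>. indicator {\<alpha><..<1} \<beta> * t)"
    by (rule integrable_uniform_01_bounded[where B="\<bar>t\<bar>"]) (auto split: split_indicator)
  moreover have "stop_loss M X t = (\<integral>\<beta>. max (quantile M X \<beta> - t) 0 \<partial>uniform_01)"
    unfolding stop_loss_def by (rule integral_quantile_transform) simp
  ultimately show ?thesis
    using integrable_quantile_excess
    by (simp only: Bochner_Integration.integral_add integral_uniform_01_indicator[OF assms])
qed

lemma ES_Rockafellar_Uryasev_le:
  assumes "0 \<le> \<alpha>" "\<alpha> < 1"
  shows "(1 - \<alpha>) * ES M \<alpha> X \<le> (1 - \<alpha>) * t + stop_loss M X t"
proof -
  have "(\<integral>\<beta>. indicator {\<alpha><..<1} \<beta> * quantile M X \<beta> \<partial>uniform_01)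
      \<le> (\<integral>\<beta>. indicator {\<alpha><..<1} \<beta> * t + max (quantile M X \<beta> - t) 0 \<partial>uniform_01)"
  proof (intro integral_mono integrable_quantile_tail Bochner_Integration.integrable_add
      integrable_quantile_excess)
    show "integrable uniform_01 (\<lambda>\<beta>. indicator {\<alpha><..<1} \<beta> * t)"
      by (rule integrable_uniform_01_bounded[where B="\<bar>t\<bar>"]) (auto split: split_indicator)
  qed (auto split: split_indicator)
  then show ?thesis
    unfolding ES_eq_integral_quantile[OF assms] integral_quantile_tail_split[OF assms] .
qed

lemma ES_Rockafellar_Uryasev_attained:
  assumes "0 \<le> \<alpha>" "\<alpha> < 1"
  obtains t where "(1 - \<alpha>) * ES M \<alpha> X = (1 - \<alpha>) * t + stop_loss M X t"
proof -
  \<comment> \<open>The minimiser is the \<open>\<alpha>\<close>-quantile; at \<open>\<alpha> = 0\<close> that is a junk value (an infimum over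
    all reals), and any essential lower bound of \<open>X\<close> works instead.\<close>
  define t where "t = (if \<alpha> = 0 then - C else quantile M X \<alpha>)"
  have "indicator {\<alpha><..<1} \<beta> * quantile M X \<beta> = indicator {\<alpha><..<1} \<beta> * t + max (quantile M X \<beta> - t) 0"
    if "\<beta> \<in> space uniform_01" for \<beta>
  proof -
    from that have \<beta>: "0 < \<beta>" "\<beta> < 1" by (auto simp: space_restrict_space)
    show ?thesis
    proof (cases "\<alpha> < \<beta>")
      case True
      then have "t \<le> quantile M X \<beta>"
        using quantile_bounds[of \<beta>] quantile_mono[of \<alpha> \<beta>] \<beta> assms by (auto simp: t_def)
      then show ?thesis using True \<beta> by auto
    next
      case False
      then have "quantile M X \<beta> \<le> t"
        using quantile_mono[of \<beta> \<alpha>] \<beta> assms by (auto simp: t_def)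
      then show ?thesis using False by auto
    qed
  qed
  then have "(1 - \<alpha>) * ES M \<alpha> X = (1 - \<alpha>) * t + stop_loss M X t"
    unfolding ES_eq_integral_quantile[OF assms] integral_quantile_tail_split[OF assms, symmetric]
    by (rule Bochner_Integration.integral_cong[OF refl])
  then show ?thesis by (rule that)
qed

lemma ES_one_le_iff: "ES M 1 X \<le> c \<longleftrightarrow> (AE \<omega> in M. X \<omega> \<le> c)"
proof -
  have "F c \<le> 1" unfolding cdf_of_def by simp
  then show ?thesis
    unfolding ES_def real_of_VaR cdf_of_eq_1_iff[symmetric] using quantile_le_iff[of 1 c] by auto
qed

lemma ES_le_iff_stop_loss:
  assumes "0 \<le> \<alpha>" "\<alpha> \<le> 1"
  shows "ES M \<alpha> X \<le> c \<longleftrightarrow> (\<exists>t\<le>c. stop_loss M X t \<le> (1 - \<alpha>) * (c - t))"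
proof (cases "\<alpha> < 1")
  case True
  show ?thesis
  proof
    assume le: "ES M \<alpha> X \<le> c"
    obtain t where t: "(1 - \<alpha>) * ES M \<alpha> X = (1 - \<alpha>) * t + stop_loss M X t"
      using ES_Rockafellar_Uryasev_attained[OF assms(1) True] .
    have "(1 - \<alpha>) * t \<le> (1 - \<alpha>) * ES M \<alpha> X"
      using t stop_loss_nonneg[of M X t] by linarith
    then have "t \<le> c"
      using le True by simp
    moreover have "(1 - \<alpha>) * ES M \<alpha> X \<le> (1 - \<alpha>) * c"
      using le True by simp
    ultimately show "\<exists>t\<le>c. stop_loss M X t \<le> (1 - \<alpha>) * (c - t)"
      using t by (auto simp: right_diff_distrib)
  next
    assume "\<exists>t\<le>c. stop_loss M X t \<le> (1 - \<alpha>) * (c - t)"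
    then obtain t where "stop_loss M X t \<le> (1 - \<alpha>) * (c - t)" by blast
    then have "(1 - \<alpha>) * ES M \<alpha> X \<le> (1 - \<alpha>) * c"
      using ES_Rockafellar_Uryasev_le[OF assms(1) True, of t] by (simp add: algebra_simps)
    then show "ES M \<alpha> X \<le> c"
      using True by simp
  qed
next
  case False
  then have "\<alpha> = 1" using assms by simp
  have "(\<exists>t\<le>c. stop_loss M X t \<le> 0) \<longleftrightarrow> (AE \<omega> in M. X \<omega> \<le> c)"
  proof
    assume "\<exists>t\<le>c. stop_loss M X t \<le> 0"
    then obtain t where "t \<le> c" "stop_loss M X t = 0"
      using stop_loss_nonneg by (metis order.antisym)
    then show "AE \<omega> in M. X \<omega> \<le> c"
      using stop_loss_eq_0_iff by (auto elim: eventually_mono)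
  qed (use stop_loss_eq_0_iff[of c] in auto)
  then show ?thesis
    using ES_one_le_iff \<open>\<alpha> = 1\<close> by simp
qed

lemma stop_loss_ge_tail:
  assumes "t \<le> x"
  shows "(x - t) * (1 - F x) \<le> stop_loss M X t"
proof -
  let ?A = "{\<omega> \<in> space M. x < X \<omega>}"
  have "?A = space M - {\<omega> \<in> space M. X \<omega> \<le> x}" by auto
  then have "prob ?A = 1 - F x"
    unfolding cdf_of_def by (simp add: prob_compl)
  then have "(x - t) * (1 - F x) = (\<integral>\<omega>. (x - t) * indicator ?A \<omega> \<partial>M)"
    by simp
  also have "\<dots> \<le> stop_loss M X t"
    unfolding stop_loss_def
  proof (rule integral_mono[OF _ integrable_stop_loss])
    show "integrable M (\<lambda>\<omega>. (x - t) * indicator ?A \<omega>)"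
      by (intro integrable_mult_right integrable_real_indicator) (auto simp: emeasure_eq_measure)
  qed (use assms in \<open>auto split: split_indicator\<close>)
  finally show ?thesis .
qed

lemma stop_loss_layer_cake:
  "ennreal (stop_loss M X t) = (\<integral>\<^sup>+ x. indicator {t<..} x * ennreal (1 - F x) \<partial>lborel)"
proof -
  interpret pair_sigma_finite M lborel
    by (intro pair_sigma_finite.intro sigma_finite_measure_axioms lborel.sigma_finite_measure_axioms)
  define f :: "'a \<Rightarrow> real \<Rightarrow> ennreal" where "f \<omega> x = (if t < x \<and> x < X \<omega> then 1 else 0)" for \<omega> x
  have "ennreal (stop_loss M X t) = (\<integral>\<^sup>+ \<omega>. ennreal (max (X \<omega> - t) 0) \<partial>M)"
    unfolding stop_loss_def by (rule nn_integral_eq_integral[OF integrable_stop_loss, symmetric]) auto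
  also have "\<dots> = (\<integral>\<^sup>+ \<omega>. (\<integral>\<^sup>+ x. f \<omega> x \<partial>lborel) \<partial>M)"
  proof (rule nn_integral_cong)
    fix \<omega>
    have "(\<integral>\<^sup>+ x. f \<omega> x \<partial>lborel) = (\<integral>\<^sup>+ x. indicator {t<..<X \<omega>} x \<partial>lborel)"
      by (rule nn_integral_cong) (simp add: f_def split: split_indicator)
    then show "ennreal (max (X \<omega> - t) 0) = (\<integral>\<^sup>+ x. f \<omega> x \<partial>lborel)"
      by (auto simp: max_def)
  qed
  also have "\<dots> = (\<integral>\<^sup>+ x. (\<integral>\<^sup>+ \<omega>. f \<omega> x \<partial>M) \<partial>lborel)"
    by (rule Fubini'[symmetric]) (unfold f_def, measurable)
  also have "\<dots> = (\<integral>\<^sup>+ x. indicator {t<..} x * ennreal (1 - F x) \<partial>lborel)"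
  proof (rule nn_integral_cong)
    fix x :: real
    let ?A = "{\<omega> \<in> space M. x < X \<omega>}"
    have "?A = space M - {\<omega> \<in> space M. X \<omega> \<le> x}" by auto
    then have "emeasure M ?A = ennreal (1 - F x)"
      unfolding cdf_of_def by (simp add: emeasure_eq_measure prob_compl)
    moreover have "(\<integral>\<^sup>+ \<omega>. f \<omega> x \<partial>M) = (\<integral>\<^sup>+ \<omega>. indicator {t<..} x * indicator ?A \<omega> \<partial>M)"
      by (rule nn_integral_cong) (auto simp: f_def split: split_indicator)
    ultimately show "(\<integral>\<^sup>+ \<omega>. f \<omega> x \<partial>M) = indicator {t<..} x * ennreal (1 - F x)"
      by (simp add: nn_integral_cmult_indicator)
  qed
  finally show ?thesis .
qed

end

section \<open>Comparison of stop-loss transforms\<close>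

lemma max_excess_convex_comb:
  fixes \<gamma> x y s u :: real
  assumes "0 \<le> \<gamma>" "\<gamma> \<le> 1"
  shows "max (\<gamma> * x + (1 - \<gamma>) * y - (\<gamma> * s + (1 - \<gamma>) * u)) 0
    \<le> \<gamma> * max (x - s) 0 + (1 - \<gamma>) * max (y - u) 0"
proof -
  have "\<gamma> * x + (1 - \<gamma>) * y - (\<gamma> * s + (1 - \<gamma>) * u) = \<gamma> * (x - s) + (1 - \<gamma>) * (y - u)"
    by (simp add: algebra_simps)
  moreover have "\<gamma> * (x - s) \<le> \<gamma> * max (x - s) 0" "(1 - \<gamma>) * (y - u) \<le> (1 - \<gamma>) * max (y - u) 0"
    using assms by (auto intro: mult_left_mono)
  moreover have "0 \<le> \<gamma> * max (x - s) 0" "0 \<le> (1 - \<gamma>) * max (y - u) 0"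
    using assms by auto
  ultimately show ?thesis
    by (intro max.boundedI) linarith+
qed

lemma min_le_convex_comb:
  fixes \<gamma> a b :: real
  assumes "0 \<le> \<gamma>" "\<gamma> \<le> 1"
  shows "min a b \<le> \<gamma> * a + (1 - \<gamma>) * b"
proof -
  have "\<gamma> * min a b \<le> \<gamma> * a" "(1 - \<gamma>) * min a b \<le> (1 - \<gamma>) * b"
    using assms by (auto intro: mult_left_mono)
  then show ?thesis
    by (simp add: algebra_simps)
qed

lemma ennreal_convex_comb:
  fixes \<gamma> a b :: real
  assumes "0 \<le> \<gamma>" "\<gamma> \<le> 1" "0 \<le> a" "0 \<le> b"
  shows "ennreal (\<gamma> * a + (1 - \<gamma>) * b) = ennreal \<gamma> * ennreal a + ennreal (1 - \<gamma>) * ennreal b"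
  using assms by (simp add: ennreal_plus ennreal_mult)

lemma Linf_integrable: "prob_space M \<Longrightarrow> X \<in> Linf M \<Longrightarrow> integrable M X"
  using Linf_imp_bounded_rv bounded_rv.integrable_X by blast

lemma integrable_stop_loss:
  "prob_space M \<Longrightarrow> X \<in> Linf M \<Longrightarrow> integrable M (\<lambda>\<omega>. max (X \<omega> - t) 0)"
  using Linf_imp_bounded_rv bounded_rv.integrable_stop_loss by blast

lemma stop_loss_mono_AE:
  assumes "prob_space M" "X \<in> Linf M" "Y \<in> Linf M" "AE \<omega> in M. Y \<omega> \<le> X \<omega>"
  shows "stop_loss M Y t \<le> stop_loss M X t"
  unfolding stop_loss_def using assms(4)
  by (intro integral_mono_AE integrable_stop_loss assms(1-3)) (auto elim: eventually_mono)

lemma stop_loss_mono_icx: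
  assumes "icx_ge M X Y"
  shows "stop_loss M Y t \<le> stop_loss M X t"
proof -
  have "mono (\<lambda>x::real. max (x - t) 0)"
    by (auto intro: monoI)
  moreover have "convex_on UNIV (\<lambda>x::real. max (x - t) 0)"
  proof (rule convex_onI)
    fix \<gamma> x y :: real assume "0 < \<gamma>" "\<gamma> < 1"
    then show "max ((1 - \<gamma>) *\<^sub>R x + \<gamma> *\<^sub>R y - t) 0 \<le> (1 - \<gamma>) * max (x - t) 0 + \<gamma> * max (y - t) 0"
      using max_excess_convex_comb[of "1 - \<gamma>" x y t t] by (simp add: left_diff_distrib)
  qed simp
  ultimately show ?thesis
    using assms unfolding icx_ge_def stop_loss_def by blast
qed

lemma stop_loss_convex_comb:
  assumes "prob_space M" "X \<in> Linf M" "Y \<in> Linf M" "0 \<le> \<gamma>" "\<gamma> \<le> 1"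
  shows "stop_loss M (\<lambda>\<omega>. \<gamma> * X \<omega> + (1 - \<gamma>) * Y \<omega>) (\<gamma> * s + (1 - \<gamma>) * u)
    \<le> \<gamma> * stop_loss M X s + (1 - \<gamma>) * stop_loss M Y u"
proof -
  have Z: "(\<lambda>\<omega>. \<gamma> * X \<omega> + (1 - \<gamma>) * Y \<omega>) \<in> Linf M"
    using assms by (intro Linf_add Linf_cmult)
  have "stop_loss M (\<lambda>\<omega>. \<gamma> * X \<omega> + (1 - \<gamma>) * Y \<omega>) (\<gamma> * s + (1 - \<gamma>) * u)
      \<le> (\<integral>\<omega>. \<gamma> * max (X \<omega> - s) 0 + (1 - \<gamma>) * max (Y \<omega> - u) 0 \<partial>M)"
    unfolding stop_loss_def using max_excess_convex_comb[OF assms(4,5)]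
    by (intro integral_mono integrable_stop_loss Z Bochner_Integration.integrable_add
          integrable_mult_right assms(1-3))
  also have "\<dots> = \<gamma> * stop_loss M X s + (1 - \<gamma>) * stop_loss M Y u"
    unfolding stop_loss_def using integrable_stop_loss[OF assms(1)] assms(2,3) by simp
  finally show ?thesis .
qed

lemma stop_loss_add_const: "stop_loss M (\<lambda>\<omega>. X \<omega> + m) t = stop_loss M X (t - m)"
  unfolding stop_loss_def by (simp add: algebra_simps)

lemma stop_loss_const: "prob_space M \<Longrightarrow> stop_loss M (\<lambda>\<omega>. c) t = max (c - t) 0"
  unfolding stop_loss_def by (simp add: prob_space.prob_space)

lemma stop_loss_mixture:
  assumes "prob_space M" "X \<in> Linf M" "Y \<in> Linf M" "Z \<in> Linf M" "0 \<le> \<gamma>" "\<gamma> \<le> 1"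
    and cdf: "\<And>x. cdf_of M Z x = \<gamma> * cdf_of M X x + (1 - \<gamma>) * cdf_of M Y x"
  shows "stop_loss M Z t = \<gamma> * stop_loss M X t + (1 - \<gamma>) * stop_loss M Y t"
proof -
  obtain Cx Cy Cz where X: "bounded_rv M X Cx" and Y: "bounded_rv M Y Cy" and Z: "bounded_rv M Z Cz"
    using Linf_imp_bounded_rv assms(1-4) by metis
  have [measurable]: "cdf_of M X \<in> borel_measurable borel" "cdf_of M Y \<in> borel_measurable borel"
    using bounded_rv.cdf_of_measurable X Y by blast+
  have cdf_le_1: "cdf_of M V x \<le> 1" for V x
    using prob_space.prob_le_1[OF assms(1)] unfolding cdf_of_def by blast
  let ?G = "\<lambda>V x. indicator {t<..} x * ennreal (1 - cdf_of M V x)"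
  have "?G Z x = ennreal \<gamma> * ?G X x + ennreal (1 - \<gamma>) * ?G Y x" for x
  proof -
    have "1 - cdf_of M Z x = \<gamma> * (1 - cdf_of M X x) + (1 - \<gamma>) * (1 - cdf_of M Y x)"
      unfolding cdf by (simp add: algebra_simps)
    then show ?thesis
      using ennreal_convex_comb[of \<gamma> "1 - cdf_of M X x" "1 - cdf_of M Y x"] assms(5,6) cdf_le_1
      by (simp add: algebra_simps)
  qed
  then have "ennreal (stop_loss M Z t)
      = (\<integral>\<^sup>+ x. ennreal \<gamma> * ?G X x + ennreal (1 - \<gamma>) * ?G Y x \<partial>lborel)"
    by (simp only: bounded_rv.stop_loss_layer_cake[OF Z])
  also have "\<dots> = ennreal \<gamma> * (\<integral>\<^sup>+ x. ?G X x \<partial>lborel) + ennreal (1 - \<gamma>) * (\<integral>\<^sup>+ x. ?G Y x \<partial>lborel)"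
    by (subst nn_integral_add) (auto simp: nn_integral_cmult)
  also have "\<dots> = ennreal (\<gamma> * stop_loss M X t + (1 - \<gamma>) * stop_loss M Y t)"
    unfolding bounded_rv.stop_loss_layer_cake[OF X, symmetric] bounded_rv.stop_loss_layer_cake[OF Y, symmetric]
    using ennreal_convex_comb[OF assms(5,6) stop_loss_nonneg[of M X t] stop_loss_nonneg[of M Y t]] ..
  finally show ?thesis
    using assms(5,6) stop_loss_nonneg[of M X t] stop_loss_nonneg[of M Y t] stop_loss_nonneg[of M Z t]
    by (subst (asm) ennreal_inj) auto
qed

lemma stop_loss_le_add_L1:
  assumes "prob_space M" "X \<in> Linf M" "Y \<in> Linf M"
  shows "stop_loss M X t \<le> stop_loss M Y t + (\<integral>\<omega>. \<bar>X \<omega> - Y \<omega>\<bar> \<partial>M)"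
proof -
  have "integrable M (\<lambda>\<omega>. \<bar>X \<omega> - Y \<omega>\<bar>)"
    using assms by (intro integrable_abs Bochner_Integration.integrable_diff Linf_integrable)
  then have "stop_loss M X t \<le> (\<integral>\<omega>. max (Y \<omega> - t) 0 + \<bar>X \<omega> - Y \<omega>\<bar> \<partial>M)"
    unfolding stop_loss_def using integrable_stop_loss[OF assms(1)] assms(2,3)
    by (intro integral_mono Bochner_Integration.integrable_add) auto
  also have "\<dots> = stop_loss M Y t + (\<integral>\<omega>. \<bar>X \<omega> - Y \<omega>\<bar> \<partial>M)"
    unfolding stop_loss_def using integrable_stop_loss[OF assms(1,3)] \<open>integrable M _\<close> by simp
  finally show ?thesis .
qed

section \<open>Expected shortfall\<close>

lemma ES_le_iff_stop_loss:
  assumes "prob_space M" "X \<in> Linf M" "0 \<le> \<alpha>" "\<alpha> \<le> 1"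
  shows "ES M \<alpha> X \<le> c \<longleftrightarrow> (\<exists>t\<le>c. stop_loss M X t \<le> (1 - \<alpha>) * (c - t))"
  using Linf_imp_bounded_rv[OF assms(1,2)] bounded_rv.ES_le_iff_stop_loss assms(3,4) by blast

lemma ES_mono_stop_loss:
  assumes "prob_space M" "X \<in> Linf M" "Y \<in> Linf M" "0 \<le> \<alpha>" "\<alpha> \<le> 1"
    and "\<And>t. stop_loss M Y t \<le> stop_loss M X t"
  shows "ES M \<alpha> Y \<le> ES M \<alpha> X"
  using ES_le_iff_stop_loss[OF assms(1,2,4,5), of "ES M \<alpha> X"]
    ES_le_iff_stop_loss[OF assms(1,3,4,5), of "ES M \<alpha> X"] assms(6) order_trans
  by blast

lemma ES_mono_level:
  assumes "prob_space M" "X \<in> Linf M" "0 \<le> \<alpha>" "\<alpha> \<le> \<alpha>'" "\<alpha>' \<le> 1"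
  shows "ES M \<alpha> X \<le> ES M \<alpha>' X"
proof -
  obtain t where "t \<le> ES M \<alpha>' X" "stop_loss M X t \<le> (1 - \<alpha>') * (ES M \<alpha>' X - t)"
    using ES_le_iff_stop_loss[OF assms(1,2), of \<alpha>' "ES M \<alpha>' X"] assms by auto
  moreover from this(1) have "(1 - \<alpha>') * (ES M \<alpha>' X - t) \<le> (1 - \<alpha>) * (ES M \<alpha>' X - t)"
    using assms by (intro mult_right_mono) auto
  ultimately have "\<exists>t\<le>ES M \<alpha>' X. stop_loss M X t \<le> (1 - \<alpha>) * (ES M \<alpha>' X - t)"
    by (blast intro: order_trans)
  then show ?thesis
    using ES_le_iff_stop_loss[OF assms(1,2), of \<alpha> "ES M \<alpha>' X"] assms by auto
qed

lemma ES_convex_comb_le_max: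
  assumes "prob_space M" "X \<in> Linf M" "Y \<in> Linf M" "0 \<le> \<alpha>" "\<alpha> \<le> 1" "0 \<le> \<gamma>" "\<gamma> \<le> 1"
  shows "ES M \<alpha> (\<lambda>\<omega>. \<gamma> * X \<omega> + (1 - \<gamma>) * Y \<omega>) \<le> max (ES M \<alpha> X) (ES M \<alpha> Y)"
proof -
  define c where "c = max (ES M \<alpha> X) (ES M \<alpha> Y)"
  obtain s where s: "s \<le> c" "stop_loss M X s \<le> (1 - \<alpha>) * (c - s)"
    using ES_le_iff_stop_loss[OF assms(1,2,4,5), of c] by (auto simp: c_def)
  obtain u where u: "u \<le> c" "stop_loss M Y u \<le> (1 - \<alpha>) * (c - u)"
    using ES_le_iff_stop_loss[OF assms(1,3,4,5), of c] by (auto simp: c_def)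
  let ?t = "\<gamma> * s + (1 - \<gamma>) * u"
  have Z: "(\<lambda>\<omega>. \<gamma> * X \<omega> + (1 - \<gamma>) * Y \<omega>) \<in> Linf M"
    using assms(2,3) by (intro Linf_add Linf_cmult)
  have t: "?t \<le> c"
    using s(1) u(1) assms(6,7) by (intro convex_bound_le) auto
  have "stop_loss M (\<lambda>\<omega>. \<gamma> * X \<omega> + (1 - \<gamma>) * Y \<omega>) ?t
      \<le> \<gamma> * stop_loss M X s + (1 - \<gamma>) * stop_loss M Y u"
    by (rule stop_loss_convex_comb[OF assms(1-3,6,7)])
  also have "\<dots> \<le> \<gamma> * ((1 - \<alpha>) * (c - s)) + (1 - \<gamma>) * ((1 - \<alpha>) * (c - u))"
    using s(2) u(2) assms(6,7) by (intro add_mono mult_left_mono) auto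
  also have "\<dots> = (1 - \<alpha>) * (c - ?t)"
    by (simp add: algebra_simps)
  finally show ?thesis
    using t ES_le_iff_stop_loss[OF assms(1) Z assms(4,5)] unfolding c_def by blast
qed

lemma ES_mixture_ge_min:
  assumes "prob_space M" "X \<in> Linf M" "Y \<in> Linf M" "Z \<in> Linf M" "0 \<le> \<alpha>" "\<alpha> \<le> 1"
    and "0 \<le> \<gamma>" "\<gamma> \<le> 1" "\<And>x. cdf_of M Z x = \<gamma> * cdf_of M X x + (1 - \<gamma>) * cdf_of M Y x"
  shows "min (ES M \<alpha> X) (ES M \<alpha> Y) \<le> ES M \<alpha> Z"
proof -
  define c where "c = ES M \<alpha> Z"
  obtain t where t: "t \<le> c" "\<gamma> * stop_loss M X t + (1 - \<gamma>) * stop_loss M Y t \<le> (1 - \<alpha>) * (c - t)"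
    using ES_le_iff_stop_loss[OF assms(1,4-6), of c] stop_loss_mixture[OF assms(1-4,7-9)]
    by (auto simp: c_def)
  have "min (stop_loss M X t) (stop_loss M Y t) \<le> (1 - \<alpha>) * (c - t)"
    using min_le_convex_comb[OF assms(7,8)] t(2) by (rule order_trans)
  then have "stop_loss M X t \<le> (1 - \<alpha>) * (c - t) \<or> stop_loss M Y t \<le> (1 - \<alpha>) * (c - t)"
    by linarith
  then have "ES M \<alpha> X \<le> c \<or> ES M \<alpha> Y \<le> c"
    using t(1) ES_le_iff_stop_loss[OF assms(1,2,5,6)] ES_le_iff_stop_loss[OF assms(1,3,5,6)] by blast
  then show ?thesis
    unfolding c_def by linarith
qed

lemma ES_add_const:
  assumes "prob_space M" "X \<in> Linf M" "0 \<le> \<alpha>" "\<alpha> \<le> 1"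
  shows "ES M \<alpha> (\<lambda>\<omega>. X \<omega> + m) = ES M \<alpha> X + m"
proof -
  have Xm: "(\<lambda>\<omega>. X \<omega> + m) \<in> Linf M"
    using assms(2) Linf_const by (rule Linf_add)
  have "ES M \<alpha> (\<lambda>\<omega>. X \<omega> + m) \<le> c \<longleftrightarrow> ES M \<alpha> X \<le> c - m" for c
  proof -
    have "(\<exists>t\<le>c. stop_loss M X (t - m) \<le> (1 - \<alpha>) * (c - t))
        \<longleftrightarrow> (\<exists>t\<le>c - m. stop_loss M X t \<le> (1 - \<alpha>) * (c - m - t))"
    proof
      assume "\<exists>t\<le>c. stop_loss M X (t - m) \<le> (1 - \<alpha>) * (c - t)"
      then obtain t where "t \<le> c" "stop_loss M X (t - m) \<le> (1 - \<alpha>) * (c - t)" by blast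
      then show "\<exists>t\<le>c - m. stop_loss M X t \<le> (1 - \<alpha>) * (c - m - t)"
        by (intro exI[of _ "t - m"]) simp
    next
      assume "\<exists>t\<le>c - m. stop_loss M X t \<le> (1 - \<alpha>) * (c - m - t)"
      then obtain t where "t \<le> c - m" "stop_loss M X t \<le> (1 - \<alpha>) * (c - m - t)" by blast
      then show "\<exists>t\<le>c. stop_loss M X (t - m) \<le> (1 - \<alpha>) * (c - t)"
        by (intro exI[of _ "t + m"]) (simp add: algebra_simps)
    qed
    then show ?thesis
      unfolding ES_le_iff_stop_loss[OF assms(1) Xm assms(3,4)] ES_le_iff_stop_loss[OF assms]
        stop_loss_add_const .
  qed
  from this[of "ES M \<alpha> X + m"] this[of "ES M \<alpha> (\<lambda>\<omega>. X \<omega> + m)"] show ?thesis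
    by simp
qed

lemma ES_const:
  assumes "prob_space M" "0 \<le> \<alpha>" "\<alpha> \<le> 1"
  shows "ES M \<alpha> (\<lambda>\<omega>. c) = c"
proof -
  have "ES M \<alpha> (\<lambda>\<omega>. c) \<le> d \<longleftrightarrow> c \<le> d" for d
  proof -
    have "(\<exists>t\<le>d. max (c - t) 0 \<le> (1 - \<alpha>) * (d - t)) \<longleftrightarrow> c \<le> d"
    proof
      assume "\<exists>t\<le>d. max (c - t) 0 \<le> (1 - \<alpha>) * (d - t)"
      then obtain t where "t \<le> d" "c - t \<le> (1 - \<alpha>) * (d - t)" by auto
      moreover have "(1 - \<alpha>) * (d - t) \<le> d - t"
        using \<open>t \<le> d\<close> assms by (intro mult_left_le_one_le) auto
      ultimately show "c \<le> d" by linarith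
    qed auto
    then show ?thesis
      unfolding ES_le_iff_stop_loss[OF assms(1) Linf_const assms(2,3)] stop_loss_const[OF assms(1)] .
  qed
  from this[of c] this[of "ES M \<alpha> (\<lambda>\<omega>. c)"] show ?thesis
    by simp
qed

lemma ES_le_of_AE_le:
  assumes "prob_space M" "X \<in> Linf M" "0 \<le> \<alpha>" "\<alpha> \<le> 1" "AE \<omega> in M. X \<omega> \<le> b"
  shows "ES M \<alpha> X \<le> b"
  using ES_mono_stop_loss[OF assms(1) Linf_const assms(2-4) stop_loss_mono_AE[OF assms(1) Linf_const assms(2,5)]]
  by (simp add: ES_const[OF assms(1,3,4)])

lemma ES_ge_of_AE_ge:
  assumes "prob_space M" "X \<in> Linf M" "0 \<le> \<alpha>" "\<alpha> \<le> 1" "AE \<omega> in M. a \<le> X \<omega>"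
  shows "a \<le> ES M \<alpha> X"
  using ES_mono_stop_loss[OF assms(1,2) Linf_const assms(3,4) stop_loss_mono_AE[OF assms(1,2) Linf_const assms(5)]]
  by (simp add: ES_const[OF assms(1,3,4)])

lemma ES_ge_of_cdf_less:
  assumes "prob_space M" "X \<in> Linf M" "0 \<le> \<alpha>" "\<alpha> \<le> 1" "cdf_of M X x < \<alpha>"
  shows "x \<le> ES M \<alpha> X"
proof (rule ccontr)
  assume "\<not> x \<le> ES M \<alpha> X"
  then obtain t where t: "t \<le> ES M \<alpha> X" "stop_loss M X t \<le> (1 - \<alpha>) * (ES M \<alpha> X - t)" "t < x"
    using ES_le_iff_stop_loss[OF assms(1-4), of "ES M \<alpha> X"] by auto
  obtain C where "bounded_rv M X C"
    using Linf_imp_bounded_rv[OF assms(1,2)] ..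
  then have "(x - t) * (1 - cdf_of M X x) \<le> stop_loss M X t"
    using t(3) by (intro bounded_rv.stop_loss_ge_tail) auto
  moreover have "(1 - \<alpha>) * (x - t) < (x - t) * (1 - cdf_of M X x)"
    using t(3) assms(5) by (subst mult.commute) (intro mult_strict_left_mono, auto)
  moreover have "(1 - \<alpha>) * (ES M \<alpha> X - t) \<le> (1 - \<alpha>) * (x - t)"
    using \<open>\<not> x \<le> ES M \<alpha> X\<close> assms(4) by (intro mult_left_mono) auto
  ultimately show False
    using t(2) by linarith
qed

lemma ES_dist_le_L1:
  assumes "prob_space M" "X \<in> Linf M" "Y \<in> Linf M" "0 \<le> \<alpha>" "\<alpha> < 1"
  shows "\<bar>ES M \<alpha> X - ES M \<alpha> Y\<bar> \<le> (\<integral>\<omega>. \<bar>X \<omega> - Y \<omega>\<bar> \<partial>M) / (1 - \<alpha>)"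
proof -
  have "ES M \<alpha> V \<le> ES M \<alpha> W + (\<integral>\<omega>. \<bar>V \<omega> - W \<omega>\<bar> \<partial>M) / (1 - \<alpha>)"
    if V: "V \<in> Linf M" and W: "W \<in> Linf M" for V W
  proof -
    let ?d = "(\<integral>\<omega>. \<bar>V \<omega> - W \<omega>\<bar> \<partial>M)"
    let ?c = "ES M \<alpha> W + ?d / (1 - \<alpha>)"
    obtain t where t: "t \<le> ES M \<alpha> W" "stop_loss M W t \<le> (1 - \<alpha>) * (ES M \<alpha> W - t)"
      using ES_le_iff_stop_loss[OF assms(1) W assms(4), of "ES M \<alpha> W"] assms(5) by auto
    have "0 \<le> ?d / (1 - \<alpha>)"
      using assms(5) by simp
    moreover have "(1 - \<alpha>) * (?c - t) = (1 - \<alpha>) * (ES M \<alpha> W - t) + ?d"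
      using assms(5) by (simp add: field_simps)
    then have "stop_loss M V t \<le> (1 - \<alpha>) * (?c - t)"
      using stop_loss_le_add_L1[OF assms(1) V W, of t] t(2) by linarith
    ultimately have "\<exists>t'\<le>?c. stop_loss M V t' \<le> (1 - \<alpha>) * (?c - t')"
      using t(1) by (intro exI[of _ t]) auto
    then show ?thesis
      using ES_le_iff_stop_loss[OF assms(1) V assms(4) less_imp_le[OF assms(5)]] by blast
  qed
  from this[OF assms(2,3)] this[OF assms(3,2)] show ?thesis
    by (simp add: abs_minus_commute abs_le_iff)
qed

section \<open>Suprema of the form SUP x. min (f x) x\<close>

definition sup_min_diag :: "(real \<Rightarrow> real) \<Rightarrow> real" where
  "sup_min_diag f = (SUP x. min (f x) x)"

lemma sup_min_diag_upper:
  assumes "bdd_above (range f)"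
  shows "min (f x) x \<le> sup_min_diag f"
proof -
  have "bdd_above (range (\<lambda>x. min (f x) x))"
    using assms by (auto simp: bdd_above_def intro: min.coboundedI1 order_trans)
  then show ?thesis
    unfolding sup_min_diag_def by (rule cSUP_upper[OF UNIV_I])
qed

lemma sup_min_diag_least: "(\<And>x. min (f x) x \<le> b) \<Longrightarrow> sup_min_diag f \<le> b"
  unfolding sup_min_diag_def by (rule cSUP_least) auto

lemma sup_min_diag_mono:
  assumes "bdd_above (range g)" "\<And>x. f x \<le> g x"
  shows "sup_min_diag f \<le> sup_min_diag g"
proof (rule sup_min_diag_least)
  fix x
  have "min (f x) x \<le> min (g x) x"
    using assms(2) by (rule min.mono) simp
  also have "\<dots> \<le> sup_min_diag g"
    using assms(1) by (rule sup_min_diag_upper)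
  finally show "min (f x) x \<le> sup_min_diag g" .
qed

lemma sup_min_diag_const: "sup_min_diag (\<lambda>x. c) = c"
  using sup_min_diag_upper[of "\<lambda>x. c" c] sup_min_diag_least[of "\<lambda>x. c" c]
  by (simp add: antisym)

lemma sup_min_diag_le_max:
  assumes "bdd_above (range f)" "bdd_above (range g)" "\<And>x. h x \<le> max (f x) (g x)"
  shows "sup_min_diag h \<le> max (sup_min_diag f) (sup_min_diag g)"
proof (rule sup_min_diag_least)
  fix x
  have "min (h x) x \<le> max (min (f x) x) (min (g x) x)"
    using assms(3)[of x] by linarith
  then show "min (h x) x \<le> max (sup_min_diag f) (sup_min_diag g)"
    using sup_min_diag_upper[OF assms(1), of x] sup_min_diag_upper[OF assms(2), of x] by linarith
qed

lemma less_sup_min_diagE: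
  assumes "b < sup_min_diag f"
  obtains x where "b < min (f x) x"
proof -
  have "\<not> (\<forall>x. min (f x) x \<le> b)"
    using sup_min_diag_least[of f b] assms by auto
  then show ?thesis
    using that by (auto simp: not_le)
qed

lemma sup_min_diag_ge_min:
  assumes "antimono f" "antimono g" "bdd_above (range h)"
    and "\<And>x. min (f x) (g x) \<le> h x"
  shows "min (sup_min_diag f) (sup_min_diag g) \<le> sup_min_diag h"
proof (rule ccontr)
  let ?s = "sup_min_diag h"
  assume "\<not> ?thesis"
  then have "?s < sup_min_diag f" "?s < sup_min_diag g"
    by auto
  obtain x where x: "?s < min (f x) x"
    using \<open>?s < sup_min_diag f\<close> by (rule less_sup_min_diagE)
  obtain y where y: "?s < min (g y) y"
    using \<open>?s < sup_min_diag g\<close> by (rule less_sup_min_diagE)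
  have "f x \<le> f (min x y)" "g y \<le> g (min x y)"
    by (simp_all add: antimonoD[OF assms(1)] antimonoD[OF assms(2)])
  then have "?s < min (f (min x y)) (g (min x y))"
    using x y by simp
  then have "?s < h (min x y)"
    using assms(4) by (rule less_le_trans)
  then have "?s < min (h (min x y)) (min x y)"
    using x y by simp
  then show False
    using sup_min_diag_upper[OF assms(3), of "min x y"] by linarith
qed

lemma sup_min_diag_shift_le:
  assumes "bdd_above (range f)" "\<And>x. g x \<le> f (x - m) + m"
  shows "sup_min_diag g \<le> sup_min_diag f + m"
proof (rule sup_min_diag_least)
  fix x
  have "min (g x) x \<le> min (f (x - m)) (x - m) + m"
    using assms(2)[of x] by linarith
  also have "\<dots> \<le> sup_min_diag f + m"
    using sup_min_diag_upper[OF assms(1), of "x - m"] by simp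
  finally show "min (g x) x \<le> sup_min_diag f + m" .
qed

lemma sup_min_diag_le_add:
  assumes "bdd_above (range g)" "x\<^sub>0 \<le> sup_min_diag g + k" "\<And>x. x\<^sub>0 \<le> x \<Longrightarrow> f x \<le> g x + k"
    and "0 \<le> k"
  shows "sup_min_diag f \<le> sup_min_diag g + k"
proof (rule sup_min_diag_least)
  fix x
  show "min (f x) x \<le> sup_min_diag g + k"
  proof (cases "x\<^sub>0 \<le> x")
    case True
    then have "min (f x) x \<le> min (g x) x + k"
      using assms(3)[of x] assms(4) by linarith
    then show ?thesis
      using sup_min_diag_upper[OF assms(1), of x] by linarith
  next
    case False
    then show ?thesis
      using assms(2) by linarith
  qed
qed

lemma sup_min_diag_dist_le:
  assumes "bdd_above (range f)" "bdd_above (range g)" "x\<^sub>0 \<le> f x\<^sub>0"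
    and "\<And>x. x\<^sub>0 \<le> x \<Longrightarrow> \<bar>f x - g x\<bar> \<le> k"
  shows "\<bar>sup_min_diag f - sup_min_diag g\<bar> \<le> k"
proof -
  have "0 \<le> k"
    using assms(4)[of x\<^sub>0] by simp
  have close: "f x \<le> g x + k" "g x \<le> f x + k" if "x\<^sub>0 \<le> x" for x
    using assms(4)[OF that] by linarith+
  have "x\<^sub>0 \<le> sup_min_diag f"
    using sup_min_diag_upper[OF assms(1), of x\<^sub>0] assms(3) by simp
  then have "sup_min_diag g \<le> sup_min_diag f + k"
    using \<open>0 \<le> k\<close> by (intro sup_min_diag_le_add[OF assms(1), of x\<^sub>0] close) auto
  moreover have "x\<^sub>0 \<le> sup_min_diag g + k"
    using sup_min_diag_upper[OF assms(2), of x\<^sub>0] assms(3) close(1)[of x\<^sub>0] \<open>0 \<le> k\<close> by linarith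
  then have "sup_min_diag f \<le> sup_min_diag g + k"
    using \<open>0 \<le> k\<close> by (intro sup_min_diag_le_add[OF assms(2), of x\<^sub>0] close) auto
  ultimately show ?thesis
    by linarith
qed

section \<open>Expected shortfall with a level function\<close>

lemma ES_Lambda_eq_sup_min_diag: "ES_Lambda M \<Lambda> X = sup_min_diag (\<lambda>x. ES M (\<Lambda> x) X)"
  unfolding ES_Lambda_def sup_min_diag_def ..

lemma bdd_above_ES_level:
  fixes \<Lambda> :: "real \<Rightarrow> real"
  assumes "prob_space M" "X \<in> Linf M" "\<And>x. 0 \<le> \<Lambda> x \<and> \<Lambda> x \<le> 1"
  shows "bdd_above (range (\<lambda>x. ES M (\<Lambda> x) X))"
proof -
  obtain C where "bounded_rv M X C"
    using Linf_imp_bounded_rv[OF assms(1,2)] ..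
  then have "ES M (\<Lambda> x) X \<le> C" for x
    using assms by (intro ES_le_of_AE_le bounded_rv.AE_le_bound) auto
  then show ?thesis
    by (intro bdd_aboveI2)
qed

lemma antimono_ES_level:
  fixes \<Lambda> :: "real \<Rightarrow> real"
  assumes "prob_space M" "X \<in> Linf M" "antimono \<Lambda>" "\<And>x. 0 \<le> \<Lambda> x \<and> \<Lambda> x \<le> 1"
  shows "antimono (\<lambda>x. ES M (\<Lambda> x) X)"
proof (rule antimonoI)
  fix x y :: real assume "x \<le> y"
  then have "\<Lambda> y \<le> \<Lambda> x"
    by (rule antimonoD[OF assms(3)])
  then show "ES M (\<Lambda> y) X \<le> ES M (\<Lambda> x) X"
    using assms by (intro ES_mono_level) auto
qed

lemma ES_Lambda_mono_level:
  assumes "prob_space M" "X \<in> Linf M" "\<And>x. 0 \<le> \<Lambda> x \<and> \<Lambda> x \<le> 1" "\<And>x. 0 \<le> \<Lambda>' x"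
    and "\<And>x. \<Lambda>' x \<le> \<Lambda> x"
  shows "ES_Lambda M \<Lambda>' X \<le> ES_Lambda M \<Lambda> X"
  unfolding ES_Lambda_eq_sup_min_diag
proof (rule sup_min_diag_mono)
  show "bdd_above (range (\<lambda>x. ES M (\<Lambda> x) X))"
    using assms(1-3) by (rule bdd_above_ES_level)
  show "ES M (\<Lambda>' x) X \<le> ES M (\<Lambda> x) X" for x
    using assms(1,2) by (rule ES_mono_level) (use assms(3-5) in auto)
qed

lemma ES_Lambda_mono_stop_loss:
  assumes "prob_space M" "X \<in> Linf M" "Y \<in> Linf M" "\<And>x. 0 \<le> \<Lambda> x \<and> \<Lambda> x \<le> 1"
    and "\<And>t. stop_loss M Y t \<le> stop_loss M X t"
  shows "ES_Lambda M \<Lambda> Y \<le> ES_Lambda M \<Lambda> X"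
  unfolding ES_Lambda_eq_sup_min_diag
proof (rule sup_min_diag_mono)
  show "bdd_above (range (\<lambda>x. ES M (\<Lambda> x) X))"
    using assms(1,2,4) by (rule bdd_above_ES_level)
  show "ES M (\<Lambda> x) Y \<le> ES M (\<Lambda> x) X" for x
    using assms(1-3) by (rule ES_mono_stop_loss) (use assms(4,5) in auto)
qed

lemma VaR_Lambda_le_ES_Lambda:
  assumes "prob_space M" "X \<in> Linf M" "\<And>x. 0 \<le> \<Lambda> x \<and> \<Lambda> x \<le> 1"
  shows "VaR_Lambda M \<Lambda> X \<le> ereal (ES_Lambda M \<Lambda> X)"
proof (rule ereal_le_epsilon2)
  fix e :: real assume "0 < e"
  define z where "z = ES_Lambda M \<Lambda> X + e"
  have "\<Lambda> z \<le> cdf_of M X z"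
  proof (rule ccontr)
    assume "\<not> ?thesis"
    then have "z \<le> ES M (\<Lambda> z) X"
      using assms by (intro ES_ge_of_cdf_less) auto
    moreover have "bdd_above (range (\<lambda>x. ES M (\<Lambda> x) X))"
      using assms by (rule bdd_above_ES_level)
    ultimately have "z \<le> ES_Lambda M \<Lambda> X"
      using sup_min_diag_upper[where x=z] unfolding ES_Lambda_eq_sup_min_diag by fastforce
    then show False
      using \<open>0 < e\<close> by (simp add: z_def)
  qed
  then have "VaR_Lambda M \<Lambda> X \<le> ereal z"
    unfolding VaR_Lambda_def by (auto intro: INF_lower)
  then show "VaR_Lambda M \<Lambda> X \<le> ereal (ES_Lambda M \<Lambda> X) + ereal e"
    by (simp add: z_def)
qed

lemma ES_Lambda_convex_comb_le_max:
  assumes "prob_space M" "X \<in> Linf M" "Y \<in> Linf M" "\<And>x. 0 \<le> \<Lambda> x \<and> \<Lambda> x \<le> 1"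
    and "0 \<le> \<gamma>" "\<gamma> \<le> 1"
  shows "ES_Lambda M \<Lambda> (\<lambda>\<omega>. \<gamma> * X \<omega> + (1 - \<gamma>) * Y \<omega>) \<le> max (ES_Lambda M \<Lambda> X) (ES_Lambda M \<Lambda> Y)"
  unfolding ES_Lambda_eq_sup_min_diag
proof (rule sup_min_diag_le_max)
  show "bdd_above (range (\<lambda>x. ES M (\<Lambda> x) X))"
    using assms(1,2,4) by (rule bdd_above_ES_level)
  show "bdd_above (range (\<lambda>x. ES M (\<Lambda> x) Y))"
    using assms(1,3,4) by (rule bdd_above_ES_level)
  show "ES M (\<Lambda> x) (\<lambda>\<omega>. \<gamma> * X \<omega> + (1 - \<gamma>) * Y \<omega>) \<le> max (ES M (\<Lambda> x) X) (ES M (\<Lambda> x) Y)" for x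
    using assms(1-3) by (rule ES_convex_comb_le_max) (use assms(4-6) in auto)
qed

lemma ES_Lambda_const:
  assumes "prob_space M" "\<And>x. 0 \<le> \<Lambda> x \<and> \<Lambda> x \<le> 1"
  shows "ES_Lambda M \<Lambda> (\<lambda>\<omega>. c) = c"
  using ES_const[OF assms(1), of "\<Lambda> _" c] assms(2)
  by (simp add: ES_Lambda_eq_sup_min_diag sup_min_diag_const)

lemma ES_Lambda_add_const_le:
  assumes "prob_space M" "X \<in> Linf M" "antimono \<Lambda>" "\<And>x. 0 \<le> \<Lambda> x \<and> \<Lambda> x \<le> 1" "0 \<le> m"
  shows "ES_Lambda M \<Lambda> (\<lambda>\<omega>. X \<omega> + m) \<le> ES_Lambda M \<Lambda> X + m"
  unfolding ES_Lambda_eq_sup_min_diag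
proof (rule sup_min_diag_shift_le[OF bdd_above_ES_level[OF assms(1,2,4)]])
  fix x
  have "ES M (\<Lambda> x) X \<le> ES M (\<Lambda> (x - m)) X"
    by (rule antimonoD[OF antimono_ES_level[OF assms(1-4)]]) (use assms(5) in simp)
  moreover have "ES M (\<Lambda> x) (\<lambda>\<omega>. X \<omega> + m) = ES M (\<Lambda> x) X + m"
    using assms(1,2) by (rule ES_add_const) (use assms(4) in auto)
  ultimately show "ES M (\<Lambda> x) (\<lambda>\<omega>. X \<omega> + m) \<le> ES M (\<Lambda> (x - m)) X + m"
    by simp
qed

lemma ES_Lambda_mixture_ge_min:
  assumes "prob_space M" "X \<in> Linf M" "Y \<in> Linf M" "Z \<in> Linf M"
    and "antimono \<Lambda>" "\<And>x. 0 \<le> \<Lambda> x \<and> \<Lambda> x \<le> 1"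
    and "0 \<le> \<gamma>" "\<gamma> \<le> 1" "\<And>x. cdf_of M Z x = \<gamma> * cdf_of M X x + (1 - \<gamma>) * cdf_of M Y x"
  shows "min (ES_Lambda M \<Lambda> X) (ES_Lambda M \<Lambda> Y) \<le> ES_Lambda M \<Lambda> Z"
  unfolding ES_Lambda_eq_sup_min_diag
proof (rule sup_min_diag_ge_min)
  show "antimono (\<lambda>x. ES M (\<Lambda> x) X)"
    using assms(1,2,5,6) by (rule antimono_ES_level)
  show "antimono (\<lambda>x. ES M (\<Lambda> x) Y)"
    using assms(1,3,5,6) by (rule antimono_ES_level)
  show "bdd_above (range (\<lambda>x. ES M (\<Lambda> x) Z))"
    using assms(1,4,6) by (rule bdd_above_ES_level)
  show "min (ES M (\<Lambda> x) X) (ES M (\<Lambda> x) Y) \<le> ES M (\<Lambda> x) Z" for x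
    using assms(1-4) by (rule ES_mixture_ge_min) (use assms(6-9) in auto)
qed

lemma ES_Lambda_L1_continuous:
  assumes "prob_space M" "antimono \<Lambda>" "\<And>x. 0 \<le> \<Lambda> x \<and> \<Lambda> x < 1"
    and "X \<in> Linf M" "\<And>n. Xs n \<in> Linf M" "(\<lambda>n. \<integral>\<omega>. \<bar>Xs n \<omega> - X \<omega>\<bar> \<partial>M) \<longlonglongrightarrow> 0"
  shows "(\<lambda>n. ES_Lambda M \<Lambda> (Xs n)) \<longlonglongrightarrow> ES_Lambda M \<Lambda> X"
proof -
  have \<Lambda>: "0 \<le> \<Lambda> x \<and> \<Lambda> x \<le> 1" for x
    using assms(3)[of x] by simp
  obtain C where "bounded_rv M X C"
    using Linf_imp_bounded_rv[OF assms(1,4)] ..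
  then have ES_at_bound: "- C \<le> ES M (\<Lambda> (- C)) X"
    using \<Lambda> by (intro ES_ge_of_AE_ge[OF assms(1,4)] bounded_rv.AE_ge_neg_bound) auto
  \<comment> \<open>Levels \<open>x < -C\<close> do not reach the supremum, so only \<open>\<Lambda> x \<le> \<Lambda> (-C) < 1\<close> matters.\<close>
  define k where "k n = (\<integral>\<omega>. \<bar>Xs n \<omega> - X \<omega>\<bar> \<partial>M) / (1 - \<Lambda> (- C))" for n
  have "\<bar>ES_Lambda M \<Lambda> X - ES_Lambda M \<Lambda> (Xs n)\<bar> \<le> k n" for n
    unfolding ES_Lambda_eq_sup_min_diag
  proof (rule sup_min_diag_dist_le[where f="\<lambda>x. ES M (\<Lambda> x) X" and x\<^sub>0="- C"])
    show "bdd_above (range (\<lambda>x. ES M (\<Lambda> x) X))"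
      using assms(1,4) \<Lambda> by (rule bdd_above_ES_level)
    show "bdd_above (range (\<lambda>x. ES M (\<Lambda> x) (Xs n)))"
      using assms(1,5) \<Lambda> by (rule bdd_above_ES_level)
    show "- C \<le> ES M (\<Lambda> (- C)) X"
      by (fact ES_at_bound)
    fix x assume "- C \<le> x"
    then have "\<Lambda> x \<le> \<Lambda> (- C)"
      by (rule antimonoD[OF assms(2)])
    then have "(\<integral>\<omega>. \<bar>Xs n \<omega> - X \<omega>\<bar> \<partial>M) / (1 - \<Lambda> x) \<le> k n"
      unfolding k_def using assms(3)[of x] assms(3)[of "- C"] by (intro divide_left_mono) auto
    moreover have "\<bar>ES M (\<Lambda> x) (Xs n) - ES M (\<Lambda> x) X\<bar>
        \<le> (\<integral>\<omega>. \<bar>Xs n \<omega> - X \<omega>\<bar> \<partial>M) / (1 - \<Lambda> x)"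
      using assms(1) assms(5)[of n] assms(4) by (rule ES_dist_le_L1) (use assms(3)[of x] in auto)
    ultimately show "\<bar>ES M (\<Lambda> x) X - ES M (\<Lambda> x) (Xs n)\<bar> \<le> k n"
      unfolding abs_minus_commute[of "ES M (\<Lambda> x) X"] by (rule order_trans[rotated])
  qed
  then have "norm (ES_Lambda M \<Lambda> (Xs n) - ES_Lambda M \<Lambda> X) \<le> k n" for n
    unfolding real_norm_def abs_minus_commute[of "ES_Lambda M \<Lambda> (Xs n)"] .
  then have "(\<lambda>n. ES_Lambda M \<Lambda> (Xs n) - ES_Lambda M \<Lambda> X) \<longlonglongrightarrow> 0"
  proof (rule Lim_null_comparison[OF always_eventually, OF allI])
    show "k \<longlonglongrightarrow> 0"
      unfolding k_def by (rule tendsto_divide_zero[OF assms(6)])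
  qed
  then show ?thesis
    by (rule LIM_zero_cancel)
qed

theorem proposition2:
  fixes M :: "'a measure" and \<Lambda> \<Lambda>' :: "real \<Rightarrow> real"
  assumes "prob_space M" and "atomless M"
    and "antimono \<Lambda>" and "\<And>x. 0 \<le> \<Lambda> x \<and> \<Lambda> x \<le> 1"
    and "antimono \<Lambda>'" and "\<And>x. 0 \<le> \<Lambda>' x \<and> \<Lambda>' x \<le> 1"
  shows
    \<comment> \<open>(a)\<close>
    "((\<forall>x. \<Lambda> x \<ge> \<Lambda>' x) \<longrightarrow>
        (\<forall>X\<in>Linf M. ES_Lambda M \<Lambda> X \<ge> ES_Lambda M \<Lambda>' X))
     \<comment> \<open>(b)\<close>
     \<and> (\<forall>X\<in>Linf M. \<forall>Y\<in>Linf M. (AE \<omega> in M. X \<omega> \<ge> Y \<omega>) \<longrightarrow>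
          ES_Lambda M \<Lambda> X \<ge> ES_Lambda M \<Lambda> Y)
     \<comment> \<open>(c)\<close>
     \<and> (\<forall>X\<in>Linf M. ereal (ES_Lambda M \<Lambda> X) \<ge> VaR_Lambda M \<Lambda> X)
     \<comment> \<open>(d)\<close>
     \<and> (\<forall>X\<in>Linf M. \<forall>Y\<in>Linf M. \<forall>\<gamma>::real. 0 \<le> \<gamma> \<and> \<gamma> \<le> 1 \<longrightarrow>
          ES_Lambda M \<Lambda> (\<lambda>\<omega>. \<gamma> * X \<omega> + (1 - \<gamma>) * Y \<omega>)
            \<le> max (ES_Lambda M \<Lambda> X) (ES_Lambda M \<Lambda> Y))
     \<comment> \<open>(e)\<close>
     \<and> (\<forall>t::real. ES_Lambda M \<Lambda> (\<lambda>\<omega>. t) = t)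
     \<comment> \<open>(f)\<close>
     \<and> (\<forall>X\<in>Linf M. \<forall>m::real. m \<ge> 0 \<longrightarrow>
          ES_Lambda M \<Lambda> (\<lambda>\<omega>. X \<omega> + m) \<le> ES_Lambda M \<Lambda> X + m)
     \<comment> \<open>(g)\<close>
     \<and> (\<forall>X\<in>Linf M. \<forall>Y\<in>Linf M. icx_ge M X Y \<longrightarrow>
          ES_Lambda M \<Lambda> X \<ge> ES_Lambda M \<Lambda> Y)
     \<comment> \<open>(h)\<close>
     \<and> (\<forall>X\<in>Linf M. \<forall>Y\<in>Linf M. \<forall>Z\<in>Linf M. \<forall>\<gamma>::real. 0 \<le> \<gamma> \<and> \<gamma> \<le> 1 \<and>
          (\<forall>x. cdf_of M Z x = \<gamma> * cdf_of M X x + (1 - \<gamma>) * cdf_of M Y x) \<longrightarrow>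
          ES_Lambda M \<Lambda> Z \<ge> min (ES_Lambda M \<Lambda> X) (ES_Lambda M \<Lambda> Y))
     \<comment> \<open>(i)\<close>
     \<and> ((\<forall>x. \<Lambda> x < 1) \<longrightarrow>
          (\<forall>X Xs. X \<in> Linf M \<and> (\<forall>n. Xs n \<in> Linf M) \<and>
             (\<lambda>n. \<integral>\<omega>. \<bar>Xs n \<omega> - X \<omega>\<bar> \<partial>M) \<longlonglongrightarrow> 0 \<longrightarrow>
             (\<lambda>n. ES_Lambda M \<Lambda> (Xs n)) \<longlonglongrightarrow> ES_Lambda M \<Lambda> X))"
  using assms(1,3-6)
  apply (intro conjI impI ballI allI)
  subgoal by (rule ES_Lambda_mono_level) auto
  subgoal by (rule ES_Lambda_mono_stop_loss, simp_all add: stop_loss_mono_AE)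
  subgoal by (rule VaR_Lambda_le_ES_Lambda)
  subgoal by (rule ES_Lambda_convex_comb_le_max) auto
  subgoal by (rule ES_Lambda_const)
  subgoal by (rule ES_Lambda_add_const_le)
  subgoal by (rule ES_Lambda_mono_stop_loss, simp_all add: stop_loss_mono_icx)
  subgoal by (rule ES_Lambda_mixture_ge_min) auto
  subgoal by (rule ES_Lambda_L1_continuous) auto
  done

end
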